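(* Let $n\ge 3$ and let $C\in\mathbb{R}^{n\times n}$ be nonnegative, doubly stochastic, irreducible, with zero diagonal entries. Let $x(s)$ evolve by the Modified DeGroot-Friedkin model $x(s+1)=C^\top x(s)+X(s)x(s)-C^\top X(s)x(s)$, $X(s)=\mathrm{diag}(x(s))$. Then for every initial condition $x(0)\in\Delta\setminus\{e_1,\dots,e_n\}$, $x(s)\to\tfrac1n\mathbf 1$ as $s\to\infty$.
   Context: $\Delta=\{x\in\mathbb{R}^n: x\ge 0,\ \sum_i x_i=1\}$; $e_i$ is the $i$th standard basis vector; $\mathbf 1$ is the all-ones vector. *)

theory Defs
  imports "HOL-Analysis.Analysis"
begin

definition prob_simplex :: "(real ^ 'n) set" where
  "prob_simplex = {x. (\<forall>i. x $ i \<ge> 0) \<and> (\<Sum>i\<in>UNIV. x $ i) = 1}"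

definition nonneg_matrix :: "real ^ 'n ^ 'n \<Rightarrow> bool" where
  "nonneg_matrix C \<longleftrightarrow> (\<forall>i j. C $ i $ j \<ge> 0)"

definition doubly_stochastic :: "real ^ 'n ^ 'n \<Rightarrow> bool" where
  "doubly_stochastic C \<longleftrightarrow> nonneg_matrix C \<and>
     (\<forall>i. (\<Sum>j\<in>UNIV. C $ i $ j) = 1) \<and> (\<forall>j. (\<Sum>i\<in>UNIV. C $ i $ j) = 1)"

definition irreducible_matrix :: "real ^ 'n ^ 'n \<Rightarrow> bool" where
  "irreducible_matrix C \<longleftrightarrow> (\<forall>i j. (i, j) \<in> {(a, b). C $ a $ b > 0}\<^sup>*)"

definition diag_mat :: "real ^ 'n \<Rightarrow> real ^ 'n ^ 'n" where
  "diag_mat x = (\<chi> i j. if i = j then x $ i else 0)"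

definition mdf_step :: "real ^ 'n ^ 'n \<Rightarrow> real ^ 'n \<Rightarrow> real ^ 'n" where
  "mdf_step C x = transpose C *v x + diag_mat x *v x - transpose C *v (diag_mat x *v x)"

end

theory Submission
  imports Defs
begin

text \<open>
  Coordinatewise the update reads \<open>x\<^sub>i' = x\<^sub>i\<^sup>2 + \<Sum>\<^sub>j C\<^sub>j\<^sub>i x\<^sub>j (1 - x\<^sub>j)\<close>. On the simplex
  every \<open>x\<^sub>j (1 - x\<^sub>j)\<close> is at most \<open>M (1 - M)\<close> for the largest weight \<open>M\<close>, since
  \<open>x\<^sub>j + M \<le> 1\<close> unless \<open>x\<^sub>j\<close> is the maximum; as the columns of \<open>C\<close> sum to one,
  \<open>x\<^sub>i' \<le> M\<^sup>2 + M (1 - M) = M\<close>. So \<open>M\<close> is a Lyapunov function: it decreases to a limit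
  \<open>L\<close>, and \<open>L < 1\<close> because \<open>x(0)\<close> is not a vertex. By continuity the maximum stays
  exactly \<open>L\<close> along the orbit of every limit point \<open>p\<close>, and equality in the estimate
  says that a coordinate maximal after a step was maximal before, with all its
  in-neighbours of weight \<open>L\<close> or \<open>1 - L\<close>. If \<open>L \<le> 1/2\<close>, the maximisers eventually form a
  set closed under in-neighbours, which is everything by irreducibility, so \<open>p\<close> is
  uniform. If \<open>L > 1/2\<close>, the orbit is carried by a maximiser and one in-neighbour
  (which differs from it as the diagonal vanishes), so no edge leaves these two
  vertices, contradicting irreducibility for \<open>n \<ge> 3\<close>. Compactness of the simplex
  then gives convergence of the whole sequence.
\<close>

lemma LIMSEQ_if_subsequential_limits_eq:
  fixes f :: "nat \<Rightarrow> 'a::metric_space"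
  assumes S: "seq_compact S" and f: "\<forall>n. f n \<in> S"
    and limits: "\<And>r l. strict_mono r \<Longrightarrow> (f \<circ> r) \<longlonglongrightarrow> l \<Longrightarrow> l \<in> S \<Longrightarrow> l = a"
  shows "f \<longlonglongrightarrow> a"
proof (rule ccontr)
  assume "\<not> f \<longlonglongrightarrow> a"
  then obtain e where e: "e > 0" and "\<not> eventually (\<lambda>n. dist (f n) a < e) sequentially"
    unfolding tendsto_iff by blast
  then obtain r :: "nat \<Rightarrow> nat" where r: "strict_mono r" and far: "\<And>n. e \<le> dist (f (r n)) a"
    using not_eventually_sequentiallyD by (metis not_less)
  obtain l r' where "l \<in> S" and r': "strict_mono r'" and lim: "(f \<circ> r \<circ> r') \<longlonglongrightarrow> l"
    using seq_compactE[OF S, of "f \<circ> r"] f by (metis comp_apply o_assoc)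
  then have "l = a" using limits r by (metis o_assoc strict_mono_o)
  have "(\<lambda>n. dist ((f \<circ> r \<circ> r') n) a) \<longlonglongrightarrow> dist l a" by (intro tendsto_intros lim)
  then have "e \<le> dist l a" by (rule LIMSEQ_le_const) (use far in auto)
  with \<open>l = a\<close> e show False by simp
qed

lemma rtrancl_leaves_set:
  assumes "(a, b) \<in> R\<^sup>*" "a \<notin> A" "b \<in> A"
  obtains u v where "(u, v) \<in> R" "u \<notin> A" "v \<in> A"
  using assms by (induction rule: rtrancl_induct) auto

definition bern_var :: "real \<Rightarrow> real" where
  "bern_var t = t * (1 - t)"

lemma bern_var_eq_iff: "bern_var a = bern_var b \<longleftrightarrow> a = b \<or> a = 1 - b"
proof -
  have "bern_var a - bern_var b = (a - b) * (1 - a - b)" by (simp add: bern_var_def algebra_simps)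
  then show ?thesis by auto
qed

definition vec_max :: "real ^ 'n \<Rightarrow> real" where
  "vec_max x = Max (range (\<lambda>i. x $ i))"

lemma vec_max_ge: "x $ i \<le> vec_max x"
  unfolding vec_max_def by (rule Max_ge) auto

lemma vec_max_le_iff: "vec_max x \<le> b \<longleftrightarrow> (\<forall>i. x $ i \<le> b)"
  unfolding vec_max_def by (subst Max_le_iff) auto

lemma vec_max_attained:
  obtains i where "x $ i = vec_max x"
proof -
  have "vec_max x \<in> range (\<lambda>i. x $ i)" unfolding vec_max_def by (rule Max_in) auto
  then show ?thesis using that by auto
qed

lemma vec_max_le_dist: "vec_max x \<le> vec_max y + dist x y"
  unfolding vec_max_le_iff
proof
  fix i
  have "x $ i - y $ i \<le> dist x y"
    using component_le_norm_cart[of "x - y" i] by (simp add: dist_norm)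
  then show "x $ i \<le> vec_max y + dist x y" using vec_max_ge[of y i] by linarith
qed

lemma tendsto_vec_max:
  assumes "(f \<longlongrightarrow> a) F"
  shows "((\<lambda>m. vec_max (f m)) \<longlongrightarrow> vec_max a) F"
proof (rule LIM_zero_cancel, rule Lim_null_comparison)
  show "\<forall>\<^sub>F m in F. norm (vec_max (f m) - vec_max a) \<le> dist (f m) a"
  proof (intro always_eventually allI)
    fix m show "norm (vec_max (f m) - vec_max a) \<le> dist (f m) a"
      using vec_max_le_dist[of "f m" a] vec_max_le_dist[of a "f m"] by (simp add: dist_commute abs_le_iff)
  qed
  show "((\<lambda>m. dist (f m) a) \<longlongrightarrow> 0) F" using assms by (rule tendsto_dist_iff[THEN iffD1])
qed

lemma prob_simplex_nonneg: "x \<in> prob_simplex \<Longrightarrow> 0 \<le> x $ i"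
  by (simp add: prob_simplex_def)

lemma prob_simplex_sum: "x \<in> prob_simplex \<Longrightarrow> (\<Sum>i\<in>UNIV. x $ i) = 1"
  by (simp add: prob_simplex_def)

lemma prob_simplex_sum_subset_le_1:
  assumes "x \<in> prob_simplex" shows "(\<Sum>i\<in>I. x $ i) \<le> 1"
proof -
  have "(\<Sum>i\<in>I. x $ i) \<le> (\<Sum>i\<in>UNIV. x $ i)"
    by (rule sum_mono2) (use assms prob_simplex_nonneg in auto)
  then show ?thesis using prob_simplex_sum[OF assms] by simp
qed

lemma prob_simplex_le_1: "x \<in> prob_simplex \<Longrightarrow> x $ i \<le> 1"
  using prob_simplex_sum_subset_le_1[of x "{i}"] by simp

lemma prob_simplex_add_le_1: "x \<in> prob_simplex \<Longrightarrow> i \<noteq> j \<Longrightarrow> x $ i + x $ j \<le> 1"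
  using prob_simplex_sum_subset_le_1[of x "{i, j}"] by simp

lemma vec_max_nonneg: "x \<in> prob_simplex \<Longrightarrow> 0 \<le> vec_max x"
  using vec_max_ge[of x] prob_simplex_nonneg order_trans by blast

lemma vec_max_lt_1:
  assumes x: "x \<in> prob_simplex" and not_vertex: "x \<notin> {axis i 1 | i. True}"
  shows "vec_max x < 1"
proof -
  obtain i where i: "x $ i = vec_max x" by (rule vec_max_attained)
  have "x $ i \<noteq> 1"
  proof
    assume xi: "x $ i = 1"
    have "x $ j = 0" if "j \<noteq> i" for j
      using prob_simplex_add_le_1[OF x that] prob_simplex_nonneg[OF x, of j] xi by simp
    then have "x = axis i 1" using xi by (simp add: vec_eq_iff axis_def)
    with not_vertex show False by blast
  qed
  with i prob_simplex_le_1[OF x, of i] show ?thesis by simp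
qed

lemma closed_prob_simplex: "closed prob_simplex"
  unfolding prob_simplex_def
  by (intro closed_Collect_conj closed_Collect_all closed_Collect_le closed_Collect_eq
      continuous_intros)

lemma compact_prob_simplex: "compact prob_simplex"
proof -
  have "norm x \<le> 1" if "x \<in> prob_simplex" for x :: "real ^ 'n"
    using norm_le_l1_cart[of x] that by (simp add: prob_simplex_def)
  then have "bounded (prob_simplex :: (real ^ 'n) set)" unfolding bounded_iff by blast
  then show ?thesis using closed_prob_simplex by (simp add: compact_eq_bounded_closed)
qed

lemma doubly_stochastic_nonneg: "doubly_stochastic C \<Longrightarrow> 0 \<le> C $ i $ j"
  by (simp add: doubly_stochastic_def nonneg_matrix_def)

lemma doubly_stochastic_row_sum: "doubly_stochastic C \<Longrightarrow> (\<Sum>j\<in>UNIV. C $ i $ j) = 1"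
  by (simp add: doubly_stochastic_def)

lemma doubly_stochastic_col_sum: "doubly_stochastic C \<Longrightarrow> (\<Sum>i\<in>UNIV. C $ i $ j) = 1"
  by (simp add: doubly_stochastic_def)

lemma doubly_stochastic_has_in_neighbour:
  assumes "doubly_stochastic C" obtains j where "0 < C $ j $ i"
  using doubly_stochastic_col_sum[OF assms, of i] doubly_stochastic_nonneg[OF assms]
  by (metis not_le order_antisym sum.neutral zero_neq_one)

lemma mdf_step_nth:
  "mdf_step C x $ i = (x $ i)\<^sup>2 + (\<Sum>j\<in>UNIV. C $ j $ i * bern_var (x $ j))"
proof -
  have "(if k = j then x $ k else 0) * x $ j = (if k = j then x $ k * x $ j else 0)" for k j
    by simp
  then have "diag_mat x *v x = (\<chi> k. x $ k * x $ k)"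
    by (simp add: diag_mat_def matrix_vector_mult_def vec_eq_iff)
  then show ?thesis
    unfolding mdf_step_def bern_var_def
    by (simp add: matrix_vector_mult_def transpose_def power2_eq_square
        algebra_simps sum_subtractf sum.distrib flip: sum_distrib_left)
qed

lemma bern_var_nonneg: "0 \<le> t \<Longrightarrow> t \<le> 1 \<Longrightarrow> 0 \<le> bern_var t"
  by (simp add: bern_var_def)

lemma mdf_step_in_prob_simplex:
  assumes C: "doubly_stochastic C" and x: "x \<in> prob_simplex"
  shows "mdf_step C x \<in> prob_simplex"
proof -
  have "(\<Sum>i\<in>UNIV. \<Sum>j\<in>UNIV. C $ j $ i * bern_var (x $ j)) = (\<Sum>j\<in>UNIV. bern_var (x $ j))"
    by (subst sum.swap) (simp add: doubly_stochastic_row_sum[OF C] flip: sum_distrib_right)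
  then have "(\<Sum>i\<in>UNIV. mdf_step C x $ i) = (\<Sum>i\<in>UNIV. (x $ i)\<^sup>2 + bern_var (x $ i))"
    by (simp add: mdf_step_nth sum.distrib)
  also have "\<dots> = 1"
    using prob_simplex_sum[OF x] by (simp add: bern_var_def power2_eq_square algebra_simps)
  moreover have "0 \<le> mdf_step C x $ i" for i
    unfolding mdf_step_nth
    using prob_simplex_nonneg[OF x] prob_simplex_le_1[OF x] doubly_stochastic_nonneg[OF C]
    by (intro add_nonneg_nonneg sum_nonneg mult_nonneg_nonneg bern_var_nonneg) auto
  ultimately show ?thesis by (simp add: prob_simplex_def)
qed

lemma bern_var_le_vec_max:
  assumes x: "x \<in> prob_simplex" shows "bern_var (x $ j) \<le> bern_var (vec_max x)"
proof -
  obtain i where i: "x $ i = vec_max x" by (rule vec_max_attained)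
  show ?thesis
  proof (cases "j = i")
    case False
    have "x $ j + vec_max x \<le> 1" using prob_simplex_add_le_1[OF x False] i by simp
    then have "0 \<le> (vec_max x - x $ j) * (1 - vec_max x - x $ j)" using vec_max_ge[of x j] by simp
    then show ?thesis by (simp add: bern_var_def algebra_simps)
  qed (use i in simp)
qed

text \<open>The averaged term is at most \<open>bern_var M\<close> and \<open>x\<^sub>i\<^sup>2 \<le> M\<^sup>2\<close>, where \<open>M = vec_max x\<close>
  and \<open>M\<^sup>2 + bern_var M = M\<close>; equality forces equality in both estimates.\<close>
lemma mdf_step_nth_vec_max:
  assumes C: "doubly_stochastic C" and x: "x \<in> prob_simplex"
  shows "mdf_step C x $ i \<le> vec_max x"
    and "mdf_step C x $ i = vec_max x \<Longrightarrow> x $ i = vec_max x"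
    and "mdf_step C x $ i = vec_max x \<Longrightarrow> 0 < C $ j $ i \<Longrightarrow>
           bern_var (x $ j) = bern_var (vec_max x)"
proof -
  let ?M = "vec_max x"
  let ?gap = "\<lambda>j. C $ j $ i * (bern_var ?M - bern_var (x $ j))"
  have gap_nonneg: "0 \<le> ?gap j" for j
    using doubly_stochastic_nonneg[OF C] bern_var_le_vec_max[OF x] by simp
  have "(\<Sum>j\<in>UNIV. ?gap j) = bern_var ?M - (\<Sum>j\<in>UNIV. C $ j $ i * bern_var (x $ j))"
    by (simp add: right_diff_distrib sum_subtractf doubly_stochastic_col_sum[OF C]
        flip: sum_distrib_right)
  then have split: "?M - mdf_step C x $ i = (?M\<^sup>2 - (x $ i)\<^sup>2) + (\<Sum>j\<in>UNIV. ?gap j)"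
    by (simp add: mdf_step_nth bern_var_def power2_eq_square algebra_simps)
  have xi: "0 \<le> x $ i" "x $ i \<le> ?M" using prob_simplex_nonneg[OF x] vec_max_ge by auto
  then have sq: "(x $ i)\<^sup>2 \<le> ?M\<^sup>2" by (intro power_mono)
  have gaps: "0 \<le> (\<Sum>j\<in>UNIV. ?gap j)" by (intro sum_nonneg gap_nonneg)
  show "mdf_step C x $ i \<le> ?M" using split sq gaps by linarith
  assume eq: "mdf_step C x $ i = ?M"
  then have "(x $ i)\<^sup>2 = ?M\<^sup>2" and gap0: "(\<Sum>j\<in>UNIV. ?gap j) = 0"
    using split sq gaps by linarith+
  then show "x $ i = ?M" using xi power2_eq_iff_nonneg by (metis order_trans)
  assume "0 < C $ j $ i"
  moreover have "?gap j = 0" using gap0 gap_nonneg by (simp add: sum_nonneg_eq_0_iff)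
  ultimately show "bern_var (x $ j) = bern_var ?M" by simp
qed

lemma vec_max_mdf_step_le:
  "doubly_stochastic C \<Longrightarrow> x \<in> prob_simplex \<Longrightarrow> vec_max (mdf_step C x) \<le> vec_max x"
  by (simp add: vec_max_le_iff mdf_step_nth_vec_max)

lemma tendsto_mdf_step:
  assumes "(f \<longlongrightarrow> a) F"
  shows "((\<lambda>m. mdf_step C (f m)) \<longlongrightarrow> mdf_step C a) F"
proof (rule vec_tendstoI)
  fix i
  have coord: "((\<lambda>m. f m $ j) \<longlongrightarrow> a $ j) F" for j using assms by (rule tendsto_vec_nth)
  show "((\<lambda>m. mdf_step C (f m) $ i) \<longlongrightarrow> mdf_step C a $ i) F"
    unfolding mdf_step_nth bern_var_def by (intro tendsto_intros coord)
qed

lemma tendsto_funpow_mdf_step: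
  assumes "(f \<longlongrightarrow> a) F"
  shows "((\<lambda>m. (mdf_step C ^^ k) (f m)) \<longlongrightarrow> (mdf_step C ^^ k) a) F"
proof (induction k)
  case (Suc k)
  then show ?case by (simp add: tendsto_mdf_step)
qed (simp add: assms)

lemma prob_simplex_eq_uniform:
  fixes x :: "real ^ 'n"
  assumes x: "x \<in> prob_simplex" and le: "\<And>i. x $ i \<le> 1 / real CARD('n)"
  shows "x = (\<chi> i. 1 / real CARD('n))" (is "x = (\<chi> i. ?u)")
proof -
  have "(\<Sum>i\<in>UNIV. ?u - x $ i) = 0"
    using prob_simplex_sum[OF x] by (simp add: sum_subtractf)
  then have "\<forall>i\<in>UNIV. ?u - x $ i = 0"
    by (subst (asm) sum_nonneg_eq_0_iff) (use le in auto)
  then show ?thesis by (simp add: vec_eq_iff)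
qed

locale constant_max_orbit =
  fixes C :: "real ^ 'n ^ 'n" and q :: "nat \<Rightarrow> real ^ 'n" and L :: real
  assumes doubly_stochastic: "doubly_stochastic C"
    and orbit_Suc: "q (Suc k) = mdf_step C (q k)"
    and orbit_0: "q 0 \<in> prob_simplex"
    and vec_max_orbit: "vec_max (q k) = L"
begin

lemma in_prob_simplex: "q k \<in> prob_simplex"
  by (induction k) (simp_all add: orbit_0 orbit_Suc mdf_step_in_prob_simplex doubly_stochastic)

lemma le_max: "q k $ i \<le> L"
  using vec_max_ge vec_max_orbit by metis

lemma max_attained: obtains i where "q k $ i = L"
  using vec_max_attained vec_max_orbit by metis

lemma maximal_before: "q (Suc k) $ i = L \<Longrightarrow> q k $ i = L"
  using mdf_step_nth_vec_max(2)[OF doubly_stochastic in_prob_simplex]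
  by (simp add: orbit_Suc vec_max_orbit)

lemma in_neighbour_of_maximal:
  assumes "q (Suc k) $ i = L" "0 < C $ j $ i"
  shows "q k $ j = L \<or> q k $ j = 1 - L"
  using mdf_step_nth_vec_max(3)[OF doubly_stochastic in_prob_simplex] assms
  by (simp add: orbit_Suc vec_max_orbit bern_var_eq_iff)

text \<open>For \<open>L \<le> 1/2\<close> the alternative \<open>1 - L\<close> cannot occur, so the maximisers form a
  shrinking sequence of sets which, once stable, is closed under in-neighbours.\<close>
lemma uniform_if_max_le_half:
  assumes irr: "irreducible_matrix C" and half: "L \<le> 1/2"
  shows "q 0 = (\<chi> i. 1 / real CARD('n))"
proof -
  define A where "A k = {i. q k $ i = L}" for k
  have shrink: "A (Suc k) \<subseteq> A k" for k using maximal_before by (auto simp: A_def)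
  obtain K where K: "\<forall>k. card (A K) \<le> card (A k)"
    using ex_has_least_nat[of "\<lambda>k. True" 0 "\<lambda>k. card (A k)"] by auto
  have stable: "A (Suc K) = A K"
  proof (rule card_subset_eq)
    show "card (A (Suc K)) = card (A K)"
      using K card_mono[OF _ shrink[of K]] by (simp add: le_antisym)
  qed (simp_all add: shrink)
  have closed: "j \<in> A K" if "i \<in> A K" "0 < C $ j $ i" for i j
  proof -
    have "i \<in> A (Suc K)" using that(1) stable by simp
    then have "q (Suc K) $ i = L" by (simp add: A_def)
    then have "q K $ j = L \<or> q K $ j = 1 - L" using that(2) by (rule in_neighbour_of_maximal)
    then show ?thesis using half le_max[of K j] by (auto simp: A_def)
  qed
  have "A K = UNIV"
  proof (rule ccontr)
    assume "A K \<noteq> UNIV"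
    then obtain j where j: "j \<notin> A K" by auto
    obtain i where "q K $ i = L" by (rule max_attained)
    then have i: "i \<in> A K" by (simp add: A_def)
    have path: "(j, i) \<in> {(a, b). 0 < C $ a $ b}\<^sup>*"
      using irr by (simp add: irreducible_matrix_def)
    obtain u v where "(u, v) \<in> {(a, b). 0 < C $ a $ b}" "u \<notin> A K" "v \<in> A K"
      by (rule rtrancl_leaves_set[OF path j i])
    with closed show False by blast
  qed
  then have "q K $ i = L" for i unfolding A_def by blast
  then have "1 = real CARD('n) * L" using prob_simplex_sum[OF in_prob_simplex, of K] by simp
  then have "L = 1 / real CARD('n)" by (simp add: field_simps)
  then show ?thesis using le_max[of 0] by (intro prob_simplex_eq_uniform[OF orbit_0]) simp
qed

text \<open>For \<open>L > 1/2\<close> the orbit sits for two steps on a maximiser \<open>i\<close> and one in-neighbour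
  \<open>j\<close> (with weights \<open>L\<close>, \<open>1 - L\<close>); the vanishing of every other coordinate after one
  step forbids any edge leaving \<open>{i, j}\<close>.\<close>
lemma max_le_half:
  assumes n3: "CARD('n) \<ge> 3" and irr: "irreducible_matrix C"
    and diag: "\<forall>i. C $ i $ i = 0" and max_lt_1: "L < 1"
  shows "L \<le> 1/2"
proof (rule ccontr)
  assume "\<not> L \<le> 1/2"
  then have half: "1/2 < L" by simp
  obtain i where i2: "q 2 $ i = L" by (rule max_attained)
  have i1: "q 1 $ i = L" by (rule maximal_before) (use i2 in \<open>simp add: numeral_2_eq_2\<close>)
  have i0: "q 0 $ i = L" by (rule maximal_before) (use i1 in simp)
  obtain j where j: "0 < C $ j $ i" by (rule doubly_stochastic_has_in_neighbour[OF doubly_stochastic])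
  have ji: "j \<noteq> i" using j diag by auto
  have qj: "q k $ j = 1 - L" if "q (Suc k) $ i = L" for k
  proof -
    have "q k $ j + L \<le> 1"
      using prob_simplex_add_le_1[OF in_prob_simplex[of k] ji] maximal_before[OF that] by simp
    then show ?thesis using in_neighbour_of_maximal[OF that j] half by auto
  qed
  have others0: "q k $ l = 0" if "q (Suc k) $ i = L" "l \<notin> {i, j}" for k l
  proof -
    have "(\<Sum>m\<in>{i, j, l}. q k $ m) = q k $ i + q k $ j + q k $ l"
      using that(2) ji by (auto simp: add.assoc)
    then have "q k $ i + q k $ j + q k $ l \<le> 1"
      using prob_simplex_sum_subset_le_1[OF in_prob_simplex, of k "{i, j, l}"] by simp
    then show ?thesis
      using qj[OF that(1)] maximal_before[OF that(1)] prob_simplex_nonneg[OF in_prob_simplex, of k l]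
      by linarith
  qed
  have no_exit: "C $ i $ l = 0 \<and> C $ j $ l = 0" if l: "l \<notin> {i, j}" for l
  proof -
    have "q 0 $ l = 0" using others0[of 0 l] i1 l by simp
    moreover have "q 1 $ l = 0" using others0[of 1 l] i2 l by (simp add: numeral_2_eq_2)
    ultimately have "(\<Sum>m\<in>UNIV. C $ m $ l * bern_var (q 0 $ m)) = 0"
      using orbit_Suc[of 0] mdf_step_nth[of C "q 0" l] by simp
    moreover have "0 \<le> C $ m $ l * bern_var (q 0 $ m)" for m
      using doubly_stochastic_nonneg[OF doubly_stochastic] prob_simplex_nonneg[OF orbit_0]
        prob_simplex_le_1[OF orbit_0] by (simp add: bern_var_nonneg)
    ultimately have "C $ m $ l * bern_var (q 0 $ m) = 0" for m by (simp add: sum_nonneg_eq_0_iff)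
    moreover have "0 < bern_var L" using half max_lt_1 by (simp add: bern_var_def)
    moreover have "bern_var (q 0 $ i) = bern_var L" "bern_var (q 0 $ j) = bern_var L"
      using i0 qj[of 0] i1 by (simp_all add: bern_var_eq_iff)
    ultimately show ?thesis by (metis less_irrefl mult_eq_0_iff)
  qed
  have "card {i, j} < CARD('n)" using n3 ji by simp
  then obtain l where l: "l \<notin> {i, j}" by (metis UNIV_I card_mono finite leD subsetI)
  have path: "(i, l) \<in> {(a, b). 0 < C $ a $ b}\<^sup>*"
    using irr by (simp add: irreducible_matrix_def)
  have "i \<notin> - {i, j}" "l \<in> - {i, j}" using l by auto
  then obtain u v where "(u, v) \<in> {(a, b). 0 < C $ a $ b}" "u \<notin> - {i, j}" "v \<in> - {i, j}"
    by (rule rtrancl_leaves_set[OF path])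
  with no_exit show False by force
qed

end

lemma vec_max_funpow_at_limit_point:
  assumes orbit: "\<forall>s. x (Suc s) = mdf_step C (x s)"
    and r: "strict_mono r" and p: "(x \<circ> r) \<longlonglongrightarrow> p"
    and L: "(\<lambda>s. vec_max (x s)) \<longlonglongrightarrow> L"
  shows "vec_max ((mdf_step C ^^ k) p) = L"
proof -
  have shift: "x (s + k) = (mdf_step C ^^ k) (x s)" for s
    by (induction k) (simp_all add: orbit)
  have lim_p: "(\<lambda>n. vec_max ((mdf_step C ^^ k) (x (r n)))) \<longlonglongrightarrow> vec_max ((mdf_step C ^^ k) p)"
    using p by (intro tendsto_vec_max tendsto_funpow_mdf_step) (simp add: o_def)
  have "strict_mono (\<lambda>n. r n + k)" using r by (simp add: strict_mono_def)
  from LIMSEQ_subseq_LIMSEQ[OF L this]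
  have lim_L: "(\<lambda>n. vec_max ((mdf_step C ^^ k) (x (r n)))) \<longlonglongrightarrow> L" by (simp add: o_def shift)
  show ?thesis using LIMSEQ_unique[OF lim_p lim_L] .
qed

theorem theorem4:
  fixes C :: "real ^ 'n ^ 'n" and x :: "nat \<Rightarrow> real ^ 'n"
  assumes "CARD('n) \<ge> 3"
    and "nonneg_matrix C"
    and "doubly_stochastic C"
    and "irreducible_matrix C"
    and "\<forall>i. C $ i $ i = 0"
    and "\<forall>s. x (Suc s) = mdf_step C (x s)"
    and "x 0 \<in> prob_simplex - {axis i 1 | i. True}"
  shows "x \<longlonglongrightarrow> (\<chi> i. 1 / real CARD('n))"
proof -
  \<comment> \<open>\<open>nonneg_matrix C\<close> is already contained in \<open>doubly_stochastic C\<close>.\<close>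
  note n3 = assms(1) and C = assms(3) and irr = assms(4) and diag = assms(5) and orbit = assms(6)
  have x: "x s \<in> prob_simplex" for s
    by (induction s) (use assms(7) in \<open>simp_all add: orbit mdf_step_in_prob_simplex[OF C]\<close>)
  have "decseq (\<lambda>s. vec_max (x s))"
    unfolding decseq_Suc_iff by (simp add: orbit vec_max_mdf_step_le[OF C x])
  then obtain L where L: "(\<lambda>s. vec_max (x s)) \<longlonglongrightarrow> L" and "L \<le> vec_max (x 0)"
    using decseq_convergent vec_max_nonneg[OF x] by metis
  moreover have "vec_max (x 0) < 1" using assms(7) by (intro vec_max_lt_1) auto
  ultimately have "L < 1" by simp
  show ?thesis
  proof (rule LIMSEQ_if_subsequential_limits_eq[OF compact_imp_seq_compact[OF compact_prob_simplex]])
    fix r p assume r: "strict_mono r" and "(x \<circ> r) \<longlonglongrightarrow> p" and "p \<in> prob_simplex"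
    then interpret constant_max_orbit C "\<lambda>k. (mdf_step C ^^ k) p" L
      using C vec_max_funpow_at_limit_point[OF orbit r _ L] by unfold_locales simp_all
    show "p = (\<chi> i. 1 / real CARD('n))"
      using uniform_if_max_le_half[OF irr max_le_half[OF n3 irr diag \<open>L < 1\<close>]] by simp
  qed (use x in simp)
qed

end
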